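(* Let $L=\Lambda_{24}$ be the Leech lattice and $\mathrm{Co}_0=O(\Lambda_{24})$ its isometry group, and let $\varepsilon$ be a cocycle as in the context. Then there is no family of functions $(\zeta_g:L\to U(1))_{g\in\mathrm{Co}_0}$ such that for all $g,g_1,g_2\in\mathrm{Co}_0$ and $k,k'\in L$: (i) $\varepsilon(k,k')\zeta_g(k+k')=\zeta_g(k)\zeta_g(k')\varepsilon(g(k),g(k'))$ and (ii) $\zeta_{g_2}(g_1(k))\zeta_{g_1}(k)=\zeta_{g_2g_1}(k)$. In particular the exact sequence $1\to\mathrm{Hom}(L,\{\pm1\})\to O(\hat L)\to \mathrm{Co}_0\to1$ does not split, i.e. $\mathrm{Co}_0$ does not lift to a subgroup of $O(\hat L)$.
   Context: The Leech lattice can be taken as $\Lambda_{24}=(\tfrac1{\sqrt2}G_{24}+\sqrt2\mathbb Z^{24}_+)\cup(\tfrac1{2\sqrt2}\underline1+\tfrac1{\sqrt2}G_{24}+\sqrt2\mathbb Z^{24}_-)\subset\mathbb R^{24}$ (standard inner product), where $G_{24}$ is the extended binary Golay code with codewords viewed as $0/1$ vectors, $\mathbb Z^{24}_\pm=\{x\in\mathbb Z^{24}:|x|^2\equiv 0 \text{ resp. }1\pmod 2\}$, $\underline1=(1,\dots,1)$; it is the unique even unimodular rank-24 lattice without vectors of squared length 2. Let $\varepsilon:L\times L\to\{\pm1\}$ be a normalized 2-cocycle with $\varepsilon(k,k')\varepsilon(k',k)=(-1)^{k\cdot k'}$ (unique up to coboundary). $\hat L=\{\pm1\}\times L$ with $(a,k)(b,k')=(ab\varepsilon(k,k'),k+k')$,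 $\kappa=(-1,0)$, $e^k=(1,k)$; $O(\hat L)=\{f\in\mathrm{Aut}(\hat L):f(\kappa)=\kappa,\ \bar f\in O(L)\}$ where $\bar f(k)$ is the $L$-component of $f(e^k)$; $\mathrm{Hom}(L,\{\pm1\})$ embeds as $(a,k)\mapsto(a\eta(k),k)$. *)

theory Defs
  imports "HOL-Analysis.Analysis"
begin

type_synonym vec24 = "real ^ 24"

text \<open>G24 is the extended cyclic quadratic-residue code of
length 23 with generator polynomial 1 + x^2 + x^4 + x^5 + x^6 + x^10 + x^11, coordinate 23
being the parity bit. It is spanned over F2 by the 12 generators below (weight enumerator
1, 759, 2576, 759, 1 -- the extended binary Golay code).\<close>

definition golay_gen :: "nat \<Rightarrow> 24 set" where
  "golay_gen i = of_nat ` ({i + e | e. e \<in> {0, 2, 4, 5, 6, 10, 11}} \<union> {23})"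

definition G24 :: "24 set set" where
  "G24 = {{j. odd (card {i \<in> A. j \<in> golay_gen i})} | A. A \<subseteq> {..<12}}"

definition golay_vecs :: "vec24 set" where
  "golay_vecs = {(\<chi> j. if j \<in> c then 1 else 0) | c. c \<in> G24}"

definition Zplus :: "vec24 set" where
  "Zplus = {z. (\<forall>i. z $ i \<in> \<int>) \<and> (\<exists>m::int. z \<bullet> z = 2 * of_int m)}"

definition Zminus :: "vec24 set" where
  "Zminus = {z. (\<forall>i. z $ i \<in> \<int>) \<and> (\<exists>m::int. z \<bullet> z = 2 * of_int m + 1)}"

definition ones24 :: vec24 where
  "ones24 = (\<chi> j. 1)"

definition leech :: "vec24 set" where
  "leech =
     {(1 / sqrt 2) *\<^sub>R c + sqrt 2 *\<^sub>R z | c z. c \<in> golay_vecs \<and> z \<in> Zplus} \<union>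
     {(1 / (2 * sqrt 2)) *\<^sub>R ones24 + (1 / sqrt 2) *\<^sub>R c + sqrt 2 *\<^sub>R z | c z.
        c \<in> golay_vecs \<and> z \<in> Zminus}"

definition Co0 :: "(vec24 \<Rightarrow> vec24) set" where
  "Co0 = {g. orthogonal_transformation g \<and> g ` leech = leech}"

definition leech_cocycle :: "(vec24 \<Rightarrow> vec24 \<Rightarrow> complex) \<Rightarrow> bool" where
  "leech_cocycle \<epsilon> \<longleftrightarrow>
     (\<forall>k\<in>leech. \<forall>k'\<in>leech. \<epsilon> k k' \<in> {1, -1}) \<and>
     (\<forall>k\<in>leech. \<epsilon> 0 k = 1 \<and> \<epsilon> k 0 = 1) \<and>
     (\<forall>k\<in>leech. \<forall>k'\<in>leech. \<forall>k''\<in>leech.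
        \<epsilon> k k' * \<epsilon> (k + k') k'' = \<epsilon> k' k'' * \<epsilon> k (k' + k'')) \<and>
     (\<forall>k\<in>leech. \<forall>k'\<in>leech. \<epsilon> k k' * \<epsilon> k' k = (-1) powi \<lfloor>k \<bullet> k'\<rfloor>)"

definition hatL :: "(complex \<times> vec24) set" where
  "hatL = {(a, k). a \<in> {1, -1} \<and> k \<in> leech}"

definition hat_mult :: "(vec24 \<Rightarrow> vec24 \<Rightarrow> complex) \<Rightarrow> complex \<times> vec24 \<Rightarrow> complex \<times> vec24 \<Rightarrow> complex \<times> vec24" where
  "hat_mult \<epsilon> x y = (fst x * fst y * \<epsilon> (snd x) (snd y), snd x + snd y)"

definition O_hat :: "(vec24 \<Rightarrow> vec24 \<Rightarrow> complex) \<Rightarrow> ((complex \<times> vec24) \<Rightarrow> (complex \<times> vec24)) set" where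
  "O_hat \<epsilon> = {f. bij_betw f hatL hatL \<and>
      (\<forall>x\<in>hatL. \<forall>y\<in>hatL. f (hat_mult \<epsilon> x y) = hat_mult \<epsilon> (f x) (f y)) \<and>
      f (-1, 0) = (-1, 0) \<and>
      (\<exists>g\<in>Co0. \<forall>k\<in>leech. snd (f (1, k)) = g k)}"

end

theory Submission
  imports Defs
begin

text \<open>Suppose zeta were such a lift (the splitting s gives one, zeta g k being the sign of
  s g (1, k)). For an involution g and v in L, the relations force zeta g (g v + v) = (-1)^(g v . v).
  For commuting g and h, vectors n1 and n2 fixed by g and h, and v with g v = v - n2 and
  h v = v + n1, computing zeta at h g v = g h v in two ways and applying the cocycle identity to
  n1, n2 and g v gives zeta g n1 * zeta h n2 = (-1)^(n1 . n2). In Co0 take for g the sign change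
  on a dodecad and for h an involution of M24 preserving that dodecad; explicit Leech vectors
  with g v1 . v1 = -1, h v2 . v2 = -2 and n1 . n2 = 0, where n1 = g v1 + v1 and n2 = h v2 + v2,
  then give -1 = 1.\<close>

subsection \<open>Lifts of a group of isometries along a cocycle\<close>

locale cocycle_lift =
  fixes L :: "'v::real_inner set" and G :: "('v \<Rightarrow> 'v) set"
    and \<epsilon> :: "'v \<Rightarrow> 'v \<Rightarrow> complex" and \<zeta> :: "('v \<Rightarrow> 'v) \<Rightarrow> 'v \<Rightarrow> complex"
  assumes G_maps: "g \<in> G \<Longrightarrow> k \<in> L \<Longrightarrow> g k \<in> L"
    and G_linear: "g \<in> G \<Longrightarrow> linear g"
    and eps_sign: "k \<in> L \<Longrightarrow> k' \<in> L \<Longrightarrow> \<epsilon> k k' \<in> {1, -1}"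
    and eps_cocycle: "k \<in> L \<Longrightarrow> k' \<in> L \<Longrightarrow> k'' \<in> L \<Longrightarrow>
      \<epsilon> k k' * \<epsilon> (k + k') k'' = \<epsilon> k' k'' * \<epsilon> k (k' + k'')"
    and eps_commutator: "k \<in> L \<Longrightarrow> k' \<in> L \<Longrightarrow> \<epsilon> k k' * \<epsilon> k' k = (-1) powi \<lfloor>k \<bullet> k'\<rfloor>"
    and zeta_nonzero: "g \<in> G \<Longrightarrow> k \<in> L \<Longrightarrow> \<zeta> g k \<noteq> 0"
    and zeta_mult: "g \<in> G \<Longrightarrow> k \<in> L \<Longrightarrow> k' \<in> L \<Longrightarrow> k + k' \<in> L \<Longrightarrow>
      \<epsilon> k k' * \<zeta> g (k + k') = \<zeta> g k * \<zeta> g k' * \<epsilon> (g k) (g k')"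
    and zeta_comp: "g1 \<in> G \<Longrightarrow> g2 \<in> G \<Longrightarrow> k \<in> L \<Longrightarrow> \<zeta> g2 (g1 k) * \<zeta> g1 k = \<zeta> (g2 \<circ> g1) k"
begin

lemma eps_square: "k \<in> L \<Longrightarrow> k' \<in> L \<Longrightarrow> \<epsilon> k k' * \<epsilon> k k' = 1"
  using eps_sign[of k k'] by auto

lemma zeta_id: "id \<in> G \<Longrightarrow> k \<in> L \<Longrightarrow> \<zeta> id k = 1"
  using zeta_comp[of id id k] zeta_nonzero[of id k] by simp

lemma zeta_involution:
  assumes "g \<in> G" "id \<in> G" "g \<circ> g = id" "k \<in> L"
  shows "\<zeta> g (g k) * \<zeta> g k = 1"
  using zeta_comp[of g g k] zeta_id[of k] assms by simp

lemma zeta_orbit_sum: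
  assumes g: "g \<in> G" "id \<in> G" "g \<circ> g = id" and v: "v \<in> L" "g v + v \<in> L"
  shows "\<zeta> g (g v + v) = (-1) powi \<lfloor>g v \<bullet> v\<rfloor>"
proof -
  have gv: "g v \<in> L" "g (g v) = v" using G_maps g v by (auto simp: fun_eq_iff)
  have "\<epsilon> (g v) v * \<zeta> g (g v + v) = \<epsilon> v (g v)"
    using zeta_mult[OF g(1) gv(1) v] zeta_involution[OF g v(1)] gv(2) by simp
  then have "\<epsilon> (g v) v * (\<epsilon> (g v) v * \<zeta> g (g v + v)) = \<epsilon> (g v) v * \<epsilon> v (g v)" by simp
  then show ?thesis
    using eps_square[OF gv(1) v(1)] eps_commutator[OF gv(1) v(1)] by (simp add: mult.assoc[symmetric])
qed

lemma zeta_commute: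
  assumes "g \<in> G" "h \<in> G" "g \<circ> h = h \<circ> g" "k \<in> L"
  shows "\<zeta> h (g k) * \<zeta> g k = \<zeta> g (h k) * \<zeta> h k"
  using zeta_comp[of g h k] zeta_comp[of h g k] assms by simp

lemma zeta_fixed_product:
  assumes g: "g \<in> G" and h: "h \<in> G" and comm: "g \<circ> h = h \<circ> g"
    and L: "n1 \<in> L" "n2 \<in> L" "v \<in> L" "n1 + n2 \<in> L"
    and fixed: "g n1 = n1" "h n2 = n2"
    and moved: "g v + n2 = v" "h v = n1 + v"
  shows "\<zeta> g n1 * \<zeta> h n2 = (-1) powi \<lfloor>n1 \<bullet> n2\<rfloor>"
proof -
  define p where "p = g v"
  have hp: "h p = n1 + p"
    using comm moved(2) fixed(1) linear_add[OF G_linear[OF g]] unfolding p_def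
    by (metis comp_apply)
  have Lp: "p \<in> L" "h v \<in> L" "h p \<in> L"
    unfolding p_def using G_maps g h L by auto
  have v_eq: "n2 + p = v" using moved(1) unfolding p_def by (simp add: add.commute)
  define x1 x2 y1 y2 where "x1 = \<epsilon> n1 v" "x2 = \<epsilon> n1 p" "y1 = \<epsilon> n2 p" "y2 = \<epsilon> n2 (h p)"
  have signs: "x1 * x1 = 1" "y1 * y1 = 1" "\<epsilon> (n1 + n2) p * \<epsilon> (n1 + n2) p = 1"
    unfolding x1_x2_y1_y2_def using eps_square L Lp by auto
  have mult_g: "x1 * \<zeta> g (h v) = \<zeta> g n1 * \<zeta> g v * x2"
    using zeta_mult[OF g L(1) L(3)] moved(2) fixed(1) Lp unfolding x1_x2_y1_y2_def p_def by simp
  have mult_h: "y1 * \<zeta> h v = \<zeta> h n2 * \<zeta> h p * y2"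
    using zeta_mult[OF h L(2) Lp(1)] v_eq fixed(2) L unfolding x1_x2_y1_y2_def by simp
  have "\<zeta> h p * \<zeta> g v = \<zeta> g (h v) * \<zeta> h v"
    using zeta_commute[OF g h comm L(3)] unfolding p_def .
  also have "\<dots> = (x1 * x2 * y1 * y2) * (\<zeta> g n1 * \<zeta> h n2) * (\<zeta> h p * \<zeta> g v)"
  proof -
    have "\<zeta> g (h v) = x1 * (x1 * \<zeta> g (h v))" "\<zeta> h v = y1 * (y1 * \<zeta> h v)"
      by (simp_all add: mult.assoc[symmetric] signs)
    then show ?thesis unfolding mult_g mult_h by (simp add: ac_simps)
  qed
  finally have prod: "(x1 * x2 * y1 * y2) * (\<zeta> g n1 * \<zeta> h n2) = 1"
    using zeta_nonzero g h L Lp by simp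
  have "\<epsilon> n1 n2 * \<epsilon> (n1 + n2) p = y1 * x1" "\<epsilon> n2 n1 * \<epsilon> (n1 + n2) p = x2 * y2"
    using eps_cocycle[of n1 n2 p] eps_cocycle[of n2 n1 p] L Lp v_eq hp
    unfolding x1_x2_y1_y2_def by (simp_all add: add.commute)
  then have "x1 * x2 * y1 * y2 = (-1) powi \<lfloor>n1 \<bullet> n2\<rfloor>"
    using eps_commutator[OF L(1,2)] signs(3) by (metis (no_types, lifting) mult.assoc mult.commute mult_1_right)
  then show ?thesis
    using prod by (metis mult.assoc mult_1_left power_int_minus_one_mult_self)
qed

end

subsection \<open>The Golay code\<close>

definition coord :: "24 \<Rightarrow> nat" where
  "coord j = nat (Rep_bit0 j)"

lemma coord_less: "coord j < 24"
  unfolding coord_def using Rep_bit0[of j] by auto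

lemma of_nat_coord [simp]: "(of_nat (coord j) :: 24) = j"
  unfolding coord_def using Rep_bit0[of j] by (simp add: bit0.of_nat_eq Rep_bit0_inverse)

lemma coord_of_nat: "n < 24 \<Longrightarrow> coord (of_nat n :: 24) = n"
  unfolding coord_def by (simp add: bit0.of_nat_eq Abs_bit0_inverse)

lemma bij_betw_coord: "bij_betw coord UNIV {..<24}"
proof (rule bij_betwI')
  show "coord x = coord y \<longleftrightarrow> x = y" for x y by (metis of_nat_coord)
  show "\<exists>x\<in>UNIV. n = coord x" if "n \<in> {..<24}" for n
    using that coord_of_nat[of n] by (metis UNIV_I lessThan_iff)
qed (simp add: coord_less)

lemma mem_of_nat_image_iff: "S \<subseteq> {..<24} \<Longrightarrow> (j \<in> (of_nat ` S :: 24 set)) = (coord j \<in> S)"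
  by (auto simp: coord_of_nat subset_iff) (metis of_nat_coord image_eqI)

lemma inj_on_of_nat_24: "inj_on (of_nat :: nat \<Rightarrow> 24) {..<24}"
  by (metis coord_of_nat inj_on_inverseI lessThan_iff)

lemma sum_UNIV_coord: "(\<Sum>j\<in>UNIV. f (coord j)) = (\<Sum>n<24. f n)"
  using sum.reindex_bij_betw[OF bij_betw_coord, of f] .

definition golay_codeword :: "nat set \<Rightarrow> 24 set" where
  "golay_codeword A = {j. odd (card {i \<in> A. j \<in> golay_gen i})}"

lemma G24_eq: "G24 = golay_codeword ` Pow {..<12}"
  unfolding G24_def golay_codeword_def by blast

lemma golay_codeword_empty [simp]: "golay_codeword {} = {}"
  unfolding golay_codeword_def by simp

lemma golay_codeword_insert:
  assumes "finite A" "a \<notin> A"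
  shows "golay_codeword (insert a A) = sym_diff (golay_gen a) (golay_codeword A)"
proof -
  have "card {i \<in> insert a A. j \<in> golay_gen i} = card {i \<in> A. j \<in> golay_gen i} + of_bool (j \<in> golay_gen a)"
    for j
  proof (cases "j \<in> golay_gen a")
    case True
    then have "{i \<in> insert a A. j \<in> golay_gen i} = insert a {i \<in> A. j \<in> golay_gen i}" by auto
    then show ?thesis using True assms by simp
  next
    case False
    then have "{i \<in> insert a A. j \<in> golay_gen i} = {i \<in> A. j \<in> golay_gen i}" by auto
    then show ?thesis using False by simp
  qed
  then show ?thesis unfolding golay_codeword_def by auto
qed

lemma G24_empty: "{} \<in> G24"
  unfolding G24_eq by (auto intro: image_eqI[where x = "{}"])

lemma G24_sym_diff_gen:
  assumes "a < 12" "X \<in> G24"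
  shows "sym_diff (golay_gen a) X \<in> G24"
proof -
  obtain A where A: "A \<subseteq> {..<12}" "X = golay_codeword A"
    using assms(2) unfolding G24_eq by blast
  have fin: "finite (A - {a})" using A(1) finite_subset by blast
  show ?thesis
  proof (cases "a \<in> A")
    case True
    then have "X = sym_diff (golay_gen a) (golay_codeword (A - {a}))"
      using A golay_codeword_insert[OF fin] by (metis Diff_iff insert_Diff singletonI)
    then have "sym_diff (golay_gen a) X = golay_codeword (A - {a})" by blast
    then show ?thesis using A(1) unfolding G24_eq by blast
  next
    case False
    then have "sym_diff (golay_gen a) X = golay_codeword (insert a A)"
      using A golay_codeword_insert[of A a] finite_subset[OF A(1)] by simp
    then show ?thesis using A(1) assms(1) unfolding G24_eq by blast
  qed
qed

lemma G24_induct [consumes 1, case_names empty sym_diff_gen]: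
  assumes "X \<in> G24" "P {}"
    and "\<And>a Y. a < 12 \<Longrightarrow> Y \<in> G24 \<Longrightarrow> P Y \<Longrightarrow> P (sym_diff (golay_gen a) Y)"
  shows "P X"
proof -
  obtain A where A: "A \<subseteq> {..<12}" "X = golay_codeword A"
    using assms(1) unfolding G24_eq by blast
  have "finite A" using A(1) finite_subset by blast
  then have "A \<subseteq> {..<12} \<Longrightarrow> P (golay_codeword A) \<and> golay_codeword A \<in> G24"
  proof (induction A rule: finite_induct)
    case empty
    then show ?case using assms(2) G24_empty by simp
  next
    case (insert a A)
    then show ?case using assms(3) G24_sym_diff_gen golay_codeword_insert by simp
  qed
  then show ?thesis using A by blast
qed

lemma G24_sym_diff: "S \<in> G24 \<Longrightarrow> T \<in> G24 \<Longrightarrow> sym_diff S T \<in> G24"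
proof (induction S rule: G24_induct)
  case empty
  then show ?case by simp
next
  case (sym_diff_gen a Y)
  then have "sym_diff (golay_gen a) (sym_diff Y T) \<in> G24" using G24_sym_diff_gen by blast
  moreover have "sym_diff (sym_diff (golay_gen a) Y) T = sym_diff (golay_gen a) (sym_diff Y T)" by blast
  ultimately show ?case by simp
qed

lemma even_card_sym_diff_Int:
  assumes "finite S"
  shows "even (card (sym_diff X Y \<inter> S)) \<longleftrightarrow> (even (card (X \<inter> S)) \<longleftrightarrow> even (card (Y \<inter> S)))"
proof -
  have "card (X \<inter> S) + card (Y \<inter> S) = card (sym_diff X Y \<inter> S) + 2 * card (X \<inter> Y \<inter> S)"
  proof -
    have "card (X \<inter> S) + card (Y \<inter> S) = card ((X \<inter> S) \<union> (Y \<inter> S)) + card (X \<inter> Y \<inter> S)"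
      using card_Un_Int[of "X \<inter> S" "Y \<inter> S"] assms by (simp add: Int_ac)
    moreover have "card ((X \<inter> S) \<union> (Y \<inter> S)) = card (sym_diff X Y \<inter> S) + card (X \<inter> Y \<inter> S)"
      using assms by (subst card_Un_disjoint[symmetric]) (auto intro: arg_cong[where f = card])
    ultimately show ?thesis by simp
  qed
  then show ?thesis by (metis even_add even_mult_iff even_numeral)
qed

definition golay_word :: "nat \<Rightarrow> bool list" where
  "golay_word i = replicate i False @ [True, False, True, False, True, True, True, False, False, False, True, True]
     @ replicate (11 - i) False @ [True]"

definition word_support :: "bool list \<Rightarrow> nat set" where
  "word_support w = {n. n < length w \<and> w ! n}"

definition golay_sum :: "nat list \<Rightarrow> bool list" where
  "golay_sum A = foldr (\<lambda>a w. map2 (\<noteq>) (golay_word a) w) A (replicate 24 False)"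

lemma golay_word_eq_map:
  "\<forall>i\<in>{..<12}. golay_word i = map (\<lambda>n. n = 23 \<or> (i \<le> n \<and> n - i \<in> {0, 2, 4, 5, 6, 10, 11})) [0..<24]"
  unfolding golay_word_def by code_simp

lemma length_golay_word [simp]: "i < 12 \<Longrightarrow> length (golay_word i) = 24"
  by (simp add: golay_word_def)

lemma length_golay_sum [simp]: "set A \<subseteq> {..<12} \<Longrightarrow> length (golay_sum A) = 24"
  by (induction A) (simp_all add: golay_sum_def)

lemma golay_sum_Cons [simp]: "golay_sum (a # A) = map2 (\<noteq>) (golay_word a) (golay_sum A)"
  by (simp add: golay_sum_def)

lemma word_support_subset: "length w = 24 \<Longrightarrow> word_support w \<subseteq> {..<24}"
  by (auto simp: word_support_def)

lemma mem_word_image_iff: "length w = 24 \<Longrightarrow> (j \<in> (of_nat ` word_support w :: 24 set)) = w ! coord j"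
  by (simp add: mem_of_nat_image_iff word_support_subset) (simp add: word_support_def coord_less)

lemma golay_gen_eq_word: "i < 12 \<Longrightarrow> golay_gen i = of_nat ` word_support (golay_word i)"
proof -
  assume "i < 12"
  then have "word_support (golay_word i) = (+) i ` {0, 2, 4, 5, 6, 10, 11} \<union> {23}"
    using golay_word_eq_map by (auto simp: word_support_def image_iff intro: le_add_diff_inverse[symmetric])
  then show ?thesis
    unfolding golay_gen_def by (simp only: setcompr_eq_image Collect_mem_eq)
qed

lemma golay_sum_G24: "set A \<subseteq> {..<12} \<Longrightarrow> of_nat ` word_support (golay_sum A) \<in> G24"
proof (induction A)
  case Nil
  have "word_support (replicate 24 False) = {}" by (auto simp: word_support_def)
  then show ?case by (simp add: golay_sum_def G24_empty)
next
  case (Cons a A)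
  have "of_nat ` word_support (golay_sum (a # A)) =
      sym_diff (golay_gen a) (of_nat ` word_support (golay_sum A) :: 24 set)"
    using Cons.prems by (intro set_eqI) (auto simp: mem_word_image_iff golay_gen_eq_word coord_less)
  then show ?case using Cons G24_sym_diff_gen by simp
qed

lemma golay_words_orthogonal:
  "\<forall>i\<in>{..<12}. \<forall>i'\<in>{..<12}. even (length (filter id (map2 (\<and>) (golay_word i) (golay_word i'))))"
  unfolding golay_word_def by code_simp

lemma even_card_golay_gen_Int:
  assumes "i < 12" "i' < 12"
  shows "even (card (golay_gen i \<inter> golay_gen i'))"
proof -
  let ?w = "map2 (\<and>) (golay_word i) (golay_word i')"
  have "golay_gen i \<inter> golay_gen i' = of_nat ` word_support ?w"
    using assms by (intro set_eqI) (simp add: golay_gen_eq_word mem_word_image_iff coord_less)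
  moreover have "card (of_nat ` word_support ?w :: 24 set) = length (filter id ?w)"
    using assms inj_on_subset[OF inj_on_of_nat_24 word_support_subset[of ?w]]
    by (simp add: card_image word_support_def length_filter_conv_card)
  ultimately show ?thesis using golay_words_orthogonal assms by simp
qed

lemma G24_even_card_Int:
  assumes "S \<in> G24" "T \<in> G24"
  shows "even (card (S \<inter> T))"
proof -
  have gen: "even (card (T \<inter> golay_gen a))" if "a < 12" "T \<in> G24" for a T
    using that(2)
  proof (induction T rule: G24_induct)
    case (sym_diff_gen a' Y)
    then show ?case
      using even_card_sym_diff_Int[of "golay_gen a"] even_card_golay_gen_Int[OF _ \<open>a < 12\<close>] by simp
  qed simp
  show ?thesis
    using assms(1)
  proof (induction S rule: G24_induct)
    case (sym_diff_gen a Y)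
    then show ?case
      using even_card_sym_diff_Int[of T] gen[OF _ assms(2)] by (simp add: Int_commute)
  qed simp
qed

definition golay_perm_list :: "nat list" where
  "golay_perm_list = [23, 22, 11, 15, 17, 9, 19, 13, 20, 5, 16, 2, 21, 7, 18, 3, 10, 4, 14, 6, 8, 12, 1, 0]"

definition golay_perm :: "24 \<Rightarrow> 24" where
  "golay_perm j = of_nat (golay_perm_list ! coord j)"

lemma golay_perm_list_involution:
  "\<forall>n\<in>{..<24}. golay_perm_list ! n < 24 \<and> golay_perm_list ! (golay_perm_list ! n) = n"
  unfolding golay_perm_list_def by code_simp

lemma coord_golay_perm: "coord (golay_perm j) = golay_perm_list ! coord j"
  unfolding golay_perm_def using golay_perm_list_involution coord_less coord_of_nat by auto

lemma golay_perm_golay_perm [simp]: "golay_perm (golay_perm j) = j"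
  by (metis coord_golay_perm golay_perm_list_involution coord_less lessThan_iff of_nat_coord)

text \<open>Row a lists the generators summing to the image of generator a under golay_perm.\<close>
definition golay_perm_table :: "nat list list" where
  "golay_perm_table = [[0, 4, 5, 7, 8], [0, 4, 5, 7, 8, 11], [0, 2, 5, 7, 8, 10], [0, 2, 8, 9],
     [0, 2, 3, 5, 7, 9], [0, 3, 4, 5], [0, 5, 6, 7, 8, 10], [0, 6, 7, 8, 9, 10], [0, 2, 5, 6, 7, 10],
     [0, 3, 4, 5, 6, 7], [0, 2, 3, 8, 9, 10], [0, 1]]"

lemma golay_perm_table_correct:
  "\<forall>a\<in>{..<12}. set (golay_perm_table ! a) \<subseteq> {..<12} \<and>
     map (\<lambda>n. golay_word a ! (golay_perm_list ! n)) [0..<24] = golay_sum (golay_perm_table ! a)"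
  unfolding golay_word_def golay_sum_def golay_perm_list_def golay_perm_table_def by code_simp

lemma golay_perm_vimage_gen:
  assumes "a < 12"
  shows "golay_perm -` golay_gen a \<in> G24"
proof -
  have "golay_perm -` golay_gen a = of_nat ` word_support (golay_sum (golay_perm_table ! a))"
  proof -
    have "golay_word a ! (golay_perm_list ! coord j) = golay_sum (golay_perm_table ! a) ! coord j" for j
      using golay_perm_table_correct assms coord_less
      by (metis (no_types, lifting) diff_zero length_upt lessThan_iff nth_map nth_upt add_0)
    then show ?thesis
      using assms golay_perm_table_correct
      by (intro set_eqI) (simp add: golay_gen_eq_word mem_word_image_iff coord_golay_perm)
  qed
  then show ?thesis using golay_sum_G24 golay_perm_table_correct assms by simp
qed

lemma G24_vimage_golay_perm: "S \<in> G24 \<Longrightarrow> golay_perm -` S \<in> G24"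
proof (induction S rule: G24_induct)
  case empty
  then show ?case by (simp add: G24_empty)
next
  case (sym_diff_gen a Y)
  then show ?case using golay_perm_vimage_gen G24_sym_diff by (simp add: vimage_Un vimage_Diff)
qed

definition dodecad_word :: "bool list" where
  "dodecad_word = golay_sum [0, 5, 7, 8, 10]"

definition dodecad :: "24 set" where
  "dodecad = of_nat ` word_support dodecad_word"

lemma length_dodecad_word [simp]: "length dodecad_word = 24"
  by (simp add: dodecad_word_def)

lemma dodecad_G24: "dodecad \<in> G24"
  unfolding dodecad_def dodecad_word_def by (rule golay_sum_G24) simp

lemma golay_perm_dodecad_iff: "golay_perm j \<in> dodecad \<longleftrightarrow> j \<in> dodecad"
proof -
  have "\<forall>n\<in>{..<24}. dodecad_word ! (golay_perm_list ! n) = dodecad_word ! n"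
    unfolding dodecad_word_def golay_sum_def golay_word_def golay_perm_list_def by code_simp
  then show ?thesis
    unfolding dodecad_def by (simp add: mem_word_image_iff coord_golay_perm coord_less)
qed

subsection \<open>Two commuting involutions in Co0\<close>

definition indicator_vec :: "24 set \<Rightarrow> vec24" where
  "indicator_vec S = (\<chi> j. if j \<in> S then 1 else 0)"

definition sign_change :: "24 set \<Rightarrow> vec24 \<Rightarrow> vec24" where
  "sign_change D x = (\<chi> j. if j \<in> D then - x $ j else x $ j)"

definition coord_permute :: "(24 \<Rightarrow> 24) \<Rightarrow> vec24 \<Rightarrow> vec24" where
  "coord_permute p x = (\<chi> j. x $ p j)"

lemma golay_vecs_eq: "golay_vecs = indicator_vec ` G24"
  unfolding golay_vecs_def indicator_vec_def by blast

lemma inner_indicator_vec: "z \<bullet> indicator_vec T = (\<Sum>j\<in>T. z $ j)"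
proof -
  have "z \<bullet> indicator_vec T = (\<Sum>j\<in>UNIV. if j \<in> T then z $ j else 0)"
    unfolding inner_vec_def indicator_vec_def by (rule sum.cong) auto
  then show ?thesis by (simp add: sum.inter_filter[symmetric])
qed

lemma inner_indicator_vec_self: "indicator_vec T \<bullet> indicator_vec T = real (card T)"
  unfolding inner_indicator_vec by (simp add: indicator_vec_def)

lemma sign_change_sign_change [simp]: "sign_change D (sign_change D x) = x"
  by (simp add: sign_change_def vec_eq_iff)

lemma linear_sign_change: "linear (sign_change D)"
  by (rule linearI) (auto simp: sign_change_def vec_eq_iff)

lemma orthogonal_transformation_sign_change: "orthogonal_transformation (sign_change D)"
  unfolding orthogonal_transformation_def
  by (simp add: linear_sign_change inner_vec_def sign_change_def) (auto intro!: sum.cong)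

lemma linear_coord_permute: "linear (coord_permute p)"
  by (rule linearI) (auto simp: coord_permute_def vec_eq_iff)

lemma orthogonal_transformation_coord_permute:
  assumes "bij p"
  shows "orthogonal_transformation (coord_permute p)"
proof -
  have "(\<Sum>j\<in>UNIV. v $ p j * w $ p j) = (\<Sum>j\<in>UNIV. v $ j * w $ j)" for v w :: vec24
    using sum.reindex_bij_betw[OF assms, of "\<lambda>j. v $ j * w $ j"] by simp
  then show ?thesis
    unfolding orthogonal_transformation_def by (simp add: linear_coord_permute inner_vec_def coord_permute_def)
qed

lemma coord_permute_indicator_vec: "coord_permute p (indicator_vec S) = indicator_vec (p -` S)"
  by (simp add: coord_permute_def indicator_vec_def vec_eq_iff)

lemma sign_change_coord_permute:
  assumes "\<And>j. p j \<in> D \<longleftrightarrow> j \<in> D"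
  shows "sign_change D (coord_permute p x) = coord_permute p (sign_change D x)"
  using assms by (simp add: sign_change_def coord_permute_def vec_eq_iff)

lemma Zplus_orthogonal:
  assumes "orthogonal_transformation f" "\<forall>i. f z $ i \<in> \<int>" "z \<in> Zplus"
  shows "f z \<in> Zplus"
  using assms unfolding Zplus_def orthogonal_transformation_def by auto

lemma Zminus_orthogonal:
  assumes "orthogonal_transformation f" "\<forall>i. f z $ i \<in> \<int>" "z \<in> Zminus"
  shows "f z \<in> Zminus"
  using assms unfolding Zminus_def orthogonal_transformation_def by auto

lemma sign_change_Zplus: "z \<in> Zplus \<Longrightarrow> sign_change D z \<in> Zplus"
  by (rule Zplus_orthogonal[OF orthogonal_transformation_sign_change]) (auto simp: sign_change_def Zplus_def)

lemma sign_change_Zminus: "z \<in> Zminus \<Longrightarrow> sign_change D z \<in> Zminus"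
  by (rule Zminus_orthogonal[OF orthogonal_transformation_sign_change]) (auto simp: sign_change_def Zminus_def)

lemma norm_add_indicator_vec:
  assumes "\<forall>i. z $ i \<in> \<int>"
  obtains t :: int where "(z + indicator_vec T) \<bullet> (z + indicator_vec T) = z \<bullet> z + 2 * of_int t + real (card T)"
proof -
  have "z \<bullet> indicator_vec T \<in> \<int>"
    using assms by (simp add: inner_indicator_vec Ints_sum)
  then obtain t where "z \<bullet> indicator_vec T = of_int t" by (elim Ints_cases)
  then have "(z + indicator_vec T) \<bullet> (z + indicator_vec T) = z \<bullet> z + 2 * of_int t + real (card T)"
    by (simp add: inner_add_left inner_add_right inner_commute inner_indicator_vec_self)
  then show ?thesis by (rule that)
qed

lemma Zplus_add_indicator_vec:
  assumes "z \<in> Zplus" "even (card T)"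
  shows "z + indicator_vec T \<in> Zplus"
proof -
  obtain m :: int where m: "z \<bullet> z = 2 * of_int m" and int: "\<forall>i. z $ i \<in> \<int>"
    using assms(1) unfolding Zplus_def by blast
  obtain t :: int where "(z + indicator_vec T) \<bullet> (z + indicator_vec T) = z \<bullet> z + 2 * of_int t + real (card T)"
    using norm_add_indicator_vec[OF int] .
  moreover obtain k where "card T = 2 * k" using assms(2) by blast
  ultimately have "(z + indicator_vec T) \<bullet> (z + indicator_vec T) = 2 * of_int (m + t + int k)"
    using m by simp
  moreover have "\<forall>i. (z + indicator_vec T) $ i \<in> \<int>"
    using int by (simp add: indicator_vec_def)
  ultimately show ?thesis unfolding Zplus_def by blast
qed

lemma Zminus_add_indicator_vec:
  assumes "z \<in> Zminus" "even (card T)"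
  shows "z + indicator_vec T \<in> Zminus"
proof -
  obtain m :: int where m: "z \<bullet> z = 2 * of_int m + 1" and int: "\<forall>i. z $ i \<in> \<int>"
    using assms(1) unfolding Zminus_def by blast
  obtain t :: int where "(z + indicator_vec T) \<bullet> (z + indicator_vec T) = z \<bullet> z + 2 * of_int t + real (card T)"
    using norm_add_indicator_vec[OF int] .
  moreover obtain k where "card T = 2 * k" using assms(2) by blast
  ultimately have "(z + indicator_vec T) \<bullet> (z + indicator_vec T) = 2 * of_int (m + t + int k) + 1"
    using m by simp
  moreover have "\<forall>i. (z + indicator_vec T) $ i \<in> \<int>"
    using int by (simp add: indicator_vec_def)
  ultimately show ?thesis unfolding Zminus_def by blast
qed

lemma leech_cases:
  assumes "v \<in> leech"
  obtains (even) S z where "S \<in> G24" "z \<in> Zplus" "v = (1 / sqrt 2) *\<^sub>R indicator_vec S + sqrt 2 *\<^sub>R z"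
  | (odd) S z where "S \<in> G24" "z \<in> Zminus"
      "v = (1 / (2 * sqrt 2)) *\<^sub>R ones24 + (1 / sqrt 2) *\<^sub>R indicator_vec S + sqrt 2 *\<^sub>R z"
  using assms unfolding leech_def golay_vecs_eq by blast

lemma leech_evenI:
  "S \<in> G24 \<Longrightarrow> z \<in> Zplus \<Longrightarrow> (1 / sqrt 2) *\<^sub>R indicator_vec S + sqrt 2 *\<^sub>R z \<in> leech"
  unfolding leech_def golay_vecs_eq by blast

lemma leech_oddI:
  "S \<in> G24 \<Longrightarrow> z \<in> Zminus \<Longrightarrow>
    (1 / (2 * sqrt 2)) *\<^sub>R ones24 + (1 / sqrt 2) *\<^sub>R indicator_vec S + sqrt 2 *\<^sub>R z \<in> leech"
  unfolding leech_def golay_vecs_eq by blast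

lemma zero_leech: "0 \<in> leech"
proof -
  have "(0 :: vec24) \<in> Zplus" unfolding Zplus_def by simp
  moreover have "indicator_vec {} = 0" by (simp add: indicator_vec_def vec_eq_iff)
  ultimately show ?thesis using leech_evenI[OF G24_empty] by fastforce
qed

lemma sign_change_leech:
  assumes D: "D \<in> G24" and v: "v \<in> leech"
  shows "sign_change D v \<in> leech"
  using v
proof (cases rule: leech_cases)
  case (even S z)
  have "sign_change D v =
      (1 / sqrt 2) *\<^sub>R indicator_vec S + sqrt 2 *\<^sub>R sign_change D (z + indicator_vec (S \<inter> D))"
    unfolding even(3) by (simp add: sign_change_def indicator_vec_def vec_eq_iff field_simps)
  moreover have "sign_change D (z + indicator_vec (S \<inter> D)) \<in> Zplus"
    using Zplus_add_indicator_vec G24_even_card_Int D even sign_change_Zplus by blast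
  ultimately show ?thesis using leech_evenI even(1) by simp
next
  case (odd S z)
  have "sign_change D v = (1 / (2 * sqrt 2)) *\<^sub>R ones24 + (1 / sqrt 2) *\<^sub>R indicator_vec (sym_diff S D)
      + sqrt 2 *\<^sub>R sign_change D (z + indicator_vec D)"
    unfolding odd(3) by (simp add: sign_change_def indicator_vec_def ones24_def vec_eq_iff field_simps)
  moreover have "sign_change D (z + indicator_vec D) \<in> Zminus"
    using Zminus_add_indicator_vec G24_even_card_Int[OF D D] odd sign_change_Zminus by simp
  ultimately show ?thesis using leech_oddI G24_sym_diff[OF odd(1) D] by simp
qed

lemma coord_permute_leech:
  assumes p: "bij p" "\<And>T. T \<in> G24 \<Longrightarrow> p -` T \<in> G24" and v: "v \<in> leech"
  shows "coord_permute p v \<in> leech"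
proof -
  have orth: "orthogonal_transformation (coord_permute p)"
    using orthogonal_transformation_coord_permute[OF p(1)] .
  have int: "\<forall>i. coord_permute p z $ i \<in> \<int>" if "z \<in> Zplus \<union> Zminus" for z
    using that by (auto simp: coord_permute_def Zplus_def Zminus_def)
  have ones: "coord_permute p ones24 = ones24"
    by (simp add: coord_permute_def ones24_def vec_eq_iff)
  note lin = linear_add[OF linear_coord_permute] linear_scale[OF linear_coord_permute]
  from v show ?thesis
  proof (cases rule: leech_cases)
    case (even S z)
    then show ?thesis
      using leech_evenI p(2) Zplus_orthogonal[OF orth int]
      by (simp add: lin coord_permute_indicator_vec)
  next
    case (odd S z)
    then show ?thesis
      using leech_oddI p(2) Zminus_orthogonal[OF orth int]
      by (simp add: lin coord_permute_indicator_vec ones)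
  qed
qed

lemma Co0_involutionI:
  assumes "orthogonal_transformation f" "\<And>v. v \<in> leech \<Longrightarrow> f v \<in> leech" "\<And>x. f (f x) = x"
  shows "f \<in> Co0"
proof -
  have "leech \<subseteq> f ` leech" using assms(2,3) by (metis image_eqI subsetI)
  then show ?thesis unfolding Co0_def using assms(1,2) by blast
qed

lemma sign_change_Co0: "D \<in> G24 \<Longrightarrow> sign_change D \<in> Co0"
  by (rule Co0_involutionI) (simp_all add: orthogonal_transformation_sign_change sign_change_leech)

lemma coord_permute_golay_perm_Co0: "coord_permute golay_perm \<in> Co0"
proof -
  have "bij golay_perm" by (rule o_bij[of golay_perm]) (simp_all add: fun_eq_iff)
  then show ?thesis
    by (intro Co0_involutionI coord_permute_leech orthogonal_transformation_coord_permute G24_vimage_golay_perm)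
      (simp_all add: coord_permute_def vec_eq_iff)
qed

subsection \<open>Explicit Leech vectors\<close>

definition int_vec :: "int list \<Rightarrow> vec24" where
  "int_vec a = (\<chi> j. of_int (a ! coord j))"

definition lattice_vec :: "int list \<Rightarrow> vec24" where
  "lattice_vec a = (1 / sqrt 8) *\<^sub>R int_vec a"

definition dodecad_flip :: "int list \<Rightarrow> int list" where
  "dodecad_flip a = map (\<lambda>n. if dodecad_word ! n then - (a ! n) else a ! n) [0..<24]"

definition golay_permute :: "int list \<Rightarrow> int list" where
  "golay_permute a = map (\<lambda>n. a ! (golay_perm_list ! n)) [0..<24]"

lemma inner_int_vec: "int_vec a \<bullet> int_vec b = of_int (\<Sum>n<24. a ! n * b ! n)"
  using sum_UNIV_coord[of "\<lambda>n. real_of_int (a ! n) * real_of_int (b ! n)"]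
  unfolding inner_vec_def int_vec_def by simp

lemma inner_lattice_vec: "lattice_vec a \<bullet> lattice_vec b = of_int (\<Sum>n<24. a ! n * b ! n) / 8"
proof -
  have "(1 / sqrt 8) * (1 / sqrt 8) = (1 / 8 :: real)"
    by (simp add: real_sqrt_mult[symmetric])
  then show ?thesis unfolding lattice_vec_def by (simp add: inner_int_vec)
qed

lemma int_vec_Ints: "int_vec z $ i \<in> \<int>"
  by (simp add: int_vec_def)

lemma int_vec_Zplus:
  assumes "even (\<Sum>n<24. (z ! n)\<^sup>2)"
  shows "int_vec z \<in> Zplus"
proof -
  obtain m where "(\<Sum>n<24. z ! n * z ! n) = 2 * m"
    using assms by (auto simp: power2_eq_square elim!: evenE)
  then have "int_vec z \<bullet> int_vec z = 2 * of_int m" by (simp only: inner_int_vec)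
  then show ?thesis unfolding Zplus_def using int_vec_Ints by blast
qed

lemma int_vec_Zminus:
  assumes "odd (\<Sum>n<24. (z ! n)\<^sup>2)"
  shows "int_vec z \<in> Zminus"
proof -
  obtain m where "(\<Sum>n<24. z ! n * z ! n) = 2 * m + 1"
    using assms by (auto simp: power2_eq_square elim!: oddE)
  then have "int_vec z \<bullet> int_vec z = 2 * of_int m + 1" by (simp only: inner_int_vec)
  then show ?thesis unfolding Zminus_def using int_vec_Ints by blast
qed

lemma lattice_vec_add:
  "length a = 24 \<Longrightarrow> length b = 24 \<Longrightarrow> lattice_vec a + lattice_vec b = lattice_vec (map2 (+) a b)"
  by (simp add: lattice_vec_def int_vec_def vec_eq_iff coord_less scaleR_right_distrib[symmetric])

lemma sign_change_lattice_vec: "sign_change dodecad (lattice_vec a) = lattice_vec (dodecad_flip a)"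
  by (simp add: lattice_vec_def int_vec_def sign_change_def dodecad_flip_def dodecad_def vec_eq_iff
      mem_word_image_iff coord_less)

lemma coord_permute_lattice_vec: "coord_permute golay_perm (lattice_vec a) = lattice_vec (golay_permute a)"
  by (simp add: lattice_vec_def int_vec_def coord_permute_def golay_permute_def vec_eq_iff
      coord_golay_perm coord_less)

lemma lattice_vec_split:
  assumes "length w = 24" "\<forall>n\<in>{..<24}. 4 dvd a ! n - e - 2 * of_bool (w ! n)"
  shows "lattice_vec a = (of_int e / (2 * sqrt 2)) *\<^sub>R ones24 + (1 / sqrt 2) *\<^sub>R indicator_vec (of_nat ` word_support w)
    + sqrt 2 *\<^sub>R int_vec (map (\<lambda>n. (a ! n - e - 2 * of_bool (w ! n)) div 4) [0..<24])"
proof -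
  have "of_int (a ! n) / sqrt 8 = of_int e / (2 * sqrt 2) + of_bool (w ! n) / sqrt 2
      + sqrt 2 * of_int ((a ! n - e - 2 * of_bool (w ! n)) div 4)" if "n < 24" for n
  proof -
    obtain q where "a ! n - e - 2 * of_bool (w ! n) = 4 * q"
      using assms(2) \<open>n < 24\<close> by (meson dvdE lessThan_iff)
    then have q: "a ! n = e + 2 * of_bool (w ! n) + 4 * q" "(a ! n - e - 2 * of_bool (w ! n)) div 4 = q"
      by simp_all
    have "sqrt 8 = 2 * sqrt (2 :: real)"
      using real_sqrt_mult[of 4 2] by simp
    then show ?thesis by (simp add: q field_simps)
  qed
  then show ?thesis
    using assms(1) by (simp add: lattice_vec_def int_vec_def indicator_vec_def ones24_def vec_eq_iff
        mem_word_image_iff coord_less)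
qed

lemma lattice_vec_leech_even:
  assumes "set A \<subseteq> {..<12}" "\<forall>n\<in>{..<24}. 4 dvd a ! n - 2 * of_bool (golay_sum A ! n)"
    and "even (\<Sum>n<24. ((a ! n - 2 * of_bool (golay_sum A ! n)) div 4)\<^sup>2)"
  shows "lattice_vec a \<in> leech"
  using lattice_vec_split[of "golay_sum A" a 0] leech_evenI[OF golay_sum_G24 int_vec_Zplus] assms
  by simp

lemma lattice_vec_leech_odd:
  assumes "set A \<subseteq> {..<12}" "\<forall>n\<in>{..<24}. 4 dvd a ! n - 1 - 2 * of_bool (golay_sum A ! n)"
    and "odd (\<Sum>n<24. ((a ! n - 1 - 2 * of_bool (golay_sum A ! n)) div 4)\<^sup>2)"
  shows "lattice_vec a \<in> leech"
  using lattice_vec_split[of "golay_sum A" a 1] leech_oddI[OF golay_sum_G24 int_vec_Zminus] assms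
  by simp

definition leech_v1 :: "int list" where
  "leech_v1 = [1, 1, 1, 1, 1, 1, 1, -1, 1, -1, 1, 1, 3, 1, 1, -1, -1, 1, -1, 1, 1, -1, -1, 1]"

definition leech_v2 :: "int list" where
  "leech_v2 = [1, 1, 1, 1, 1, 1, -1, -1, -1, -1, -1, -1, 1, 1, 1, -1, 1, -1, -1, 1, 1, 3, -1, -1]"

definition leech_v3 :: "int list" where
  "leech_v3 = [0, 0, 0, 0, 0, 0, 0, 2, 0, 2, 0, 0, 2, 0, 0, 2, 2, 0, 2, 0, 0, 2, 2, 0]"

definition leech_n1 :: "int list" where
  "leech_n1 = map2 (+) (dodecad_flip leech_v1) leech_v1"

definition leech_n2 :: "int list" where
  "leech_n2 = map2 (+) (golay_permute leech_v2) leech_v2"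

lemma leech_witnesses_in_leech:
  "lattice_vec leech_v1 \<in> leech" "lattice_vec leech_v2 \<in> leech" "lattice_vec leech_v3 \<in> leech"
  "lattice_vec leech_n1 \<in> leech" "lattice_vec leech_n2 \<in> leech"
  "lattice_vec (map2 (+) leech_n1 leech_n2) \<in> leech"
proof -
  show "lattice_vec leech_v1 \<in> leech" by (rule lattice_vec_leech_odd[where A = "[7, 11]"]) code_simp+
  show "lattice_vec leech_v2 \<in> leech" by (rule lattice_vec_leech_odd[where A = "[6, 7, 11]"]) code_simp+
  show "lattice_vec leech_v3 \<in> leech" by (rule lattice_vec_leech_even[where A = "[7, 11]"]) code_simp+
  show "lattice_vec leech_n1 \<in> leech"
    by (rule lattice_vec_leech_even[where A = "[1, 6, 8, 9, 10, 11]"]) code_simp+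
  show "lattice_vec leech_n2 \<in> leech" by (rule lattice_vec_leech_even[where A = "[]"]) code_simp+
  show "lattice_vec (map2 (+) leech_n1 leech_n2) \<in> leech"
    by (rule lattice_vec_leech_even[where A = "[1, 6, 8, 9, 10, 11]"]) code_simp+
qed

lemma leech_witness_relations:
  "map2 (+) (dodecad_flip leech_v3) leech_n2 = leech_v3"
  "golay_permute leech_v3 = map2 (+) leech_n1 leech_v3"
  by code_simp+

lemma leech_witness_inner:
  "(\<Sum>n<24. dodecad_flip leech_v1 ! n * leech_v1 ! n) = -8"
  "(\<Sum>n<24. golay_permute leech_v2 ! n * leech_v2 ! n) = -16"
  "(\<Sum>n<24. leech_n1 ! n * leech_n2 ! n) = 0"
  by code_simp+

subsection \<open>Nonexistence of lifts\<close>

lemma Co0_leech: "g \<in> Co0 \<Longrightarrow> k \<in> leech \<Longrightarrow> g k \<in> leech"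
  unfolding Co0_def by blast

lemma id_Co0: "id \<in> Co0"
  unfolding Co0_def id_def by (simp add: orthogonal_transformation_id)

lemma cocycle_lift_leechI:
  assumes "leech_cocycle \<epsilon>" "\<forall>g\<in>Co0. \<forall>k\<in>leech. \<zeta> g k \<noteq> 0"
    and "\<forall>g\<in>Co0. \<forall>k\<in>leech. \<forall>k'\<in>leech. k + k' \<in> leech \<longrightarrow>
           \<epsilon> k k' * \<zeta> g (k + k') = \<zeta> g k * \<zeta> g k' * \<epsilon> (g k) (g k')"
    and "\<forall>g1\<in>Co0. \<forall>g2\<in>Co0. \<forall>k\<in>leech. \<zeta> g2 (g1 k) * \<zeta> g1 k = \<zeta> (g2 \<circ> g1) k"
  shows "cocycle_lift leech Co0 \<epsilon> \<zeta>"
proof -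
  have "linear g" if "g \<in> Co0" for g
    using that unfolding Co0_def orthogonal_transformation_def by blast
  then show ?thesis
    using assms Co0_leech unfolding leech_cocycle_def by (intro cocycle_lift.intro) blast+
qed

lemma Co0_obstruction_witness:
  obtains g h V1 V2 V3 where "g \<in> Co0" "h \<in> Co0" "g \<circ> g = id" "h \<circ> h = id" "g \<circ> h = h \<circ> g"
    and "V1 \<in> leech" "V2 \<in> leech" "V3 \<in> leech"
    and "g V1 + V1 \<in> leech" "h V2 + V2 \<in> leech" "(g V1 + V1) + (h V2 + V2) \<in> leech"
    and "g V3 + (h V2 + V2) = V3" "h V3 = (g V1 + V1) + V3"
    and "\<lfloor>g V1 \<bullet> V1\<rfloor> = -1" "\<lfloor>h V2 \<bullet> V2\<rfloor> = -2" "\<lfloor>(g V1 + V1) \<bullet> (h V2 + V2)\<rfloor> = 0"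
proof -
  define g h where "g = sign_change dodecad" "h = coord_permute golay_perm"
  define V1 V2 V3 where "V1 = lattice_vec leech_v1" "V2 = lattice_vec leech_v2" "V3 = lattice_vec leech_v3"
  have len: "length (dodecad_flip a) = 24" "length (golay_permute a) = 24"
    "length leech_v1 = 24" "length leech_v2 = 24" "length leech_v3 = 24"
    "length leech_n1 = 24" "length leech_n2 = 24" for a
    by (simp_all add: dodecad_flip_def golay_permute_def leech_v1_def leech_v2_def leech_v3_def
        leech_n1_def leech_n2_def)
  note vec_simps = g_h_def V1_V2_V3_def sign_change_lattice_vec coord_permute_lattice_vec lattice_vec_add len
  have N: "g V1 + V1 = lattice_vec leech_n1" "h V2 + V2 = lattice_vec leech_n2"
    by (simp_all add: vec_simps leech_n1_def leech_n2_def)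
  show ?thesis
  proof (rule that)
    show "g \<in> Co0" "h \<in> Co0"
      unfolding g_h_def using sign_change_Co0[OF dodecad_G24] coord_permute_golay_perm_Co0 by auto
    show "g \<circ> g = id" "h \<circ> h = id"
      unfolding g_h_def by (auto simp: coord_permute_def vec_eq_iff)
    show "g \<circ> h = h \<circ> g"
      unfolding g_h_def by (simp add: fun_eq_iff sign_change_coord_permute golay_perm_dodecad_iff)
    show "V1 \<in> leech" "V2 \<in> leech" "V3 \<in> leech"
      "g V1 + V1 \<in> leech" "h V2 + V2 \<in> leech" "(g V1 + V1) + (h V2 + V2) \<in> leech"
      using leech_witnesses_in_leech unfolding N by (simp_all add: vec_simps)
    show "g V3 + (h V2 + V2) = V3" "h V3 = (g V1 + V1) + V3"
      using leech_witness_relations unfolding N by (simp_all add: vec_simps)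
    have "g V1 \<bullet> V1 = -1" "h V2 \<bullet> V2 = -2" "(g V1 + V1) \<bullet> (h V2 + V2) = 0"
      using leech_witness_inner unfolding N by (simp_all add: vec_simps inner_lattice_vec)
    then show "\<lfloor>g V1 \<bullet> V1\<rfloor> = -1" "\<lfloor>h V2 \<bullet> V2\<rfloor> = -2" "\<lfloor>(g V1 + V1) \<bullet> (h V2 + V2)\<rfloor> = 0"
      by (simp_all add: floor_eq_iff)
  qed
qed

lemma leech_no_cocycle_lift: "\<not> cocycle_lift leech Co0 \<epsilon> \<zeta>"
proof
  assume "cocycle_lift leech Co0 \<epsilon> \<zeta>"
  then interpret cocycle_lift leech Co0 \<epsilon> \<zeta> .
  obtain g h V1 V2 V3 where G: "g \<in> Co0" "h \<in> Co0" and inv: "g \<circ> g = id" "h \<circ> h = id"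
    and comm: "g \<circ> h = h \<circ> g" and L: "V1 \<in> leech" "V2 \<in> leech" "V3 \<in> leech"
    and N: "g V1 + V1 \<in> leech" "h V2 + V2 \<in> leech" "(g V1 + V1) + (h V2 + V2) \<in> leech"
    and moved: "g V3 + (h V2 + V2) = V3" "h V3 = (g V1 + V1) + V3"
    and floors: "\<lfloor>g V1 \<bullet> V1\<rfloor> = -1" "\<lfloor>h V2 \<bullet> V2\<rfloor> = -2" "\<lfloor>(g V1 + V1) \<bullet> (h V2 + V2)\<rfloor> = 0"
    by (rule Co0_obstruction_witness)
  have "\<zeta> g (g V1 + V1) = -1" "\<zeta> h (h V2 + V2) = 1"
    using zeta_orbit_sum[OF G(1) id_Co0 inv(1) L(1) N(1)] zeta_orbit_sum[OF G(2) id_Co0 inv(2) L(2) N(2)]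
      floors by simp_all
  moreover have "g (g V1 + V1) = g V1 + V1" "h (h V2 + V2) = h V2 + V2"
    using inv linear_add[OF G_linear] G by (metis add.commute comp_apply id_apply)+
  then have "\<zeta> g (g V1 + V1) * \<zeta> h (h V2 + V2) = 1"
    using zeta_fixed_product[OF G comm N(1,2) L(3) N(3) _ _ moved] floors by simp
  ultimately show False by simp
qed

lemma mem_hatL [simp]: "(a, k) \<in> hatL \<longleftrightarrow> a \<in> {1, -1} \<and> k \<in> leech"
  unfolding hatL_def by blast

lemma O_hat_hatL: "f \<in> O_hat \<epsilon> \<Longrightarrow> x \<in> hatL \<Longrightarrow> f x \<in> hatL"
  unfolding O_hat_def by (auto dest: bij_betwE)

lemma O_hat_apply:
  assumes eps: "leech_cocycle \<epsilon>" and f: "f \<in> O_hat \<epsilon>" and a: "a \<in> {1, -1}" and k: "k \<in> leech"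
  shows "f (a, k) = (a * fst (f (1, k)), snd (f (1, k)))"
proof -
  have hom: "\<And>x y. x \<in> hatL \<Longrightarrow> y \<in> hatL \<Longrightarrow> f (hat_mult \<epsilon> x y) = hat_mult \<epsilon> (f x) (f y)"
    and kappa: "f (-1, 0) = (-1, 0)"
    using f unfolding O_hat_def by auto
  note maps = O_hat_hatL[OF f]
  have eps0: "\<And>k. k \<in> leech \<Longrightarrow> \<epsilon> 0 k = 1 \<and> \<epsilon> k 0 = 1"
    using eps unfolding leech_cocycle_def by blast
  have unit: "f (1, 0) = (1, 0)"
  proof -
    obtain b k0 where b: "f (1, 0) = (b, k0)" "b \<in> {1, -1}" "k0 \<in> leech"
      using maps[of "(1, 0)"] zero_leech by (cases "f (1, 0)") auto
    have "hat_mult \<epsilon> (1, 0) (1, 0) = (1, 0)"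
      using eps0[OF zero_leech] by (simp add: hat_mult_def)
    then have "(b, k0) = hat_mult \<epsilon> (b, k0) (b, k0)"
      using hom[of "(1, 0)" "(1, 0)"] zero_leech b(1) by simp
    then show ?thesis using b eps0[OF zero_leech] by (auto simp: hat_mult_def)
  qed
  have k': "snd (f (1, k)) \<in> leech"
    using maps[of "(1, k)"] k by (cases "f (1, k)") auto
  have "f (a, k) = f (hat_mult \<epsilon> (a, 0) (1, k))"
    using eps0[OF k] by (simp add: hat_mult_def)
  also have "\<dots> = hat_mult \<epsilon> (f (a, 0)) (f (1, k))"
    using hom a k zero_leech by simp
  also have "\<dots> = hat_mult \<epsilon> (a, 0) (f (1, k))"
    using a unit kappa by auto
  also have "\<dots> = (a * fst (f (1, k)), snd (f (1, k)))"
    using eps0[OF k'] by (simp add: hat_mult_def)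
  finally show ?thesis .
qed

lemma section_cocycle_lift:
  assumes eps: "leech_cocycle \<epsilon>"
    and s: "\<forall>g\<in>Co0. s g \<in> O_hat \<epsilon> \<and> (\<forall>k\<in>leech. snd (s g (1, k)) = g k)"
    and comp: "\<forall>g1\<in>Co0. \<forall>g2\<in>Co0. \<forall>x\<in>hatL. s (g2 \<circ> g1) x = s g2 (s g1 x)"
  shows "cocycle_lift leech Co0 \<epsilon> (\<lambda>g k. fst (s g (1, k)))"
proof -
  define \<zeta> where "\<zeta> g k = fst (s g (1, k))" for g k
  have one: "s g (1, k) = (\<zeta> g k, g k)" "\<zeta> g k \<in> {1, -1}" if "g \<in> Co0" "k \<in> leech" for g k
    using O_hat_hatL[of "s g" \<epsilon> "(1, k)"] s that unfolding \<zeta>_def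
    by (cases "s g (1, k)"; force)+
  have apply_s: "s g (a, k) = (a * \<zeta> g k, g k)" if "g \<in> Co0" "a \<in> {1, -1}" "k \<in> leech" for g a k
  proof -
    have sg: "s g \<in> O_hat \<epsilon>" using s that(1) by blast
    show ?thesis using O_hat_apply[OF eps sg that(2,3)] one that by simp
  qed
  have eps_sign: "\<epsilon> k k' \<in> {1, -1}" if "k \<in> leech" "k' \<in> leech" for k k'
    using eps that unfolding leech_cocycle_def by blast
  show ?thesis
    unfolding \<zeta>_def[symmetric]
  proof (rule cocycle_lift_leechI[OF eps]; intro ballI impI)
    show "\<zeta> g k \<noteq> 0" if "g \<in> Co0" "k \<in> leech" for g k
      using one[OF that] by auto
  next
    fix g k k' assume g: "g \<in> Co0" and k: "k \<in> leech" "k' \<in> leech" "k + k' \<in> leech"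
    have "s g (hat_mult \<epsilon> (1, k) (1, k')) = hat_mult \<epsilon> (s g (1, k)) (s g (1, k'))"
      using s g k unfolding O_hat_def by simp
    then show "\<epsilon> k k' * \<zeta> g (k + k') = \<zeta> g k * \<zeta> g k' * \<epsilon> (g k) (g k')"
      using apply_s[OF g eps_sign[OF k(1,2)] k(3)] one g k by (simp add: hat_mult_def)
  next
    fix g1 g2 k assume g: "g1 \<in> Co0" "g2 \<in> Co0" and k: "k \<in> leech"
    have "s (g2 \<circ> g1) (1, k) = s g2 (s g1 (1, k))"
      using comp g k by simp
    then have "s (g2 \<circ> g1) (1, k) = (\<zeta> g1 k * \<zeta> g2 (g1 k), g2 (g1 k))"
      using one g k apply_s Co0_leech by simp
    then show "\<zeta> g2 (g1 k) * \<zeta> g1 k = \<zeta> (g2 \<circ> g1) k"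
      unfolding \<zeta>_def[of "g2 \<circ> g1"] by (simp add: mult.commute)
  qed
qed

theorem mainTheorem2:
  fixes \<epsilon> :: "vec24 \<Rightarrow> vec24 \<Rightarrow> complex"
  assumes "leech_cocycle \<epsilon>"
  shows "\<not> (\<exists>\<zeta> :: (vec24 \<Rightarrow> vec24) \<Rightarrow> vec24 \<Rightarrow> complex.
            (\<forall>g\<in>Co0. \<forall>k\<in>leech. cmod (\<zeta> g k) = 1) \<and>
            (\<forall>g\<in>Co0. \<forall>k\<in>leech. \<forall>k'\<in>leech.
               \<epsilon> k k' * \<zeta> g (k + k') = \<zeta> g k * \<zeta> g k' * \<epsilon> (g k) (g k')) \<and>
            (\<forall>g1\<in>Co0. \<forall>g2\<in>Co0. \<forall>k\<in>leech.
               \<zeta> g2 (g1 k) * \<zeta> g1 k = \<zeta> (g2 \<circ> g1) k))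
       \<and> \<not> (\<exists>s :: (vec24 \<Rightarrow> vec24) \<Rightarrow> (complex \<times> vec24) \<Rightarrow> (complex \<times> vec24).
            (\<forall>g\<in>Co0. s g \<in> O_hat \<epsilon> \<and> (\<forall>k\<in>leech. snd (s g (1, k)) = g k)) \<and>
            (\<forall>g1\<in>Co0. \<forall>g2\<in>Co0. \<forall>x\<in>hatL. s (g2 \<circ> g1) x = s g2 (s g1 x)))"
proof (intro conjI notI; elim exE conjE)
  fix \<zeta> :: "(vec24 \<Rightarrow> vec24) \<Rightarrow> vec24 \<Rightarrow> complex"
  assume unitary: "\<forall>g\<in>Co0. \<forall>k\<in>leech. cmod (\<zeta> g k) = 1"
    and mult: "\<forall>g\<in>Co0. \<forall>k\<in>leech. \<forall>k'\<in>leech. \<epsilon> k k' * \<zeta> g (k + k') = \<zeta> g k * \<zeta> g k' * \<epsilon> (g k) (g k')"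
    and comp: "\<forall>g1\<in>Co0. \<forall>g2\<in>Co0. \<forall>k\<in>leech. \<zeta> g2 (g1 k) * \<zeta> g1 k = \<zeta> (g2 \<circ> g1) k"
  have "\<forall>g\<in>Co0. \<forall>k\<in>leech. \<zeta> g k \<noteq> 0"
    using unitary by (metis norm_zero zero_neq_one)
  then have "cocycle_lift leech Co0 \<epsilon> \<zeta>"
    using cocycle_lift_leechI[OF assms] mult comp by blast
  then show False using leech_no_cocycle_lift by blast
next
  fix s :: "(vec24 \<Rightarrow> vec24) \<Rightarrow> (complex \<times> vec24) \<Rightarrow> (complex \<times> vec24)"
  assume "\<forall>g\<in>Co0. s g \<in> O_hat \<epsilon> \<and> (\<forall>k\<in>leech. snd (s g (1, k)) = g k)"
    and "\<forall>g1\<in>Co0. \<forall>g2\<in>Co0. \<forall>x\<in>hatL. s (g2 \<circ> g1) x = s g2 (s g1 x)"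
  then show False using section_cocycle_lift[OF assms] leech_no_cocycle_lift by blast
qed

end
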